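(* Let $0<\alpha'<2/9$, $0<\beta'<1/4$, $\tfrac98\alpha'\neq\beta'$. Then the separability $\mathcal{S}=\tfrac12\big(\|z_1-z_5\|_2^2+\|z_2-z_5\|_2^2\big)$ between ID nodes and the semantic OOD node equals $$\mathcal{S}=\begin{cases}(7+12\beta'+12\alpha')\Big(\frac{1-2\beta'}{3}\big(1-\beta'-\tfrac34\alpha'\big)^2+1\Big), & \tfrac98\alpha'>\beta',\\[4pt](7+12\beta'+12\alpha')\Big(\frac{2-3\alpha'}{8}\big(1-\beta'-\tfrac34\alpha'\big)^2+1\Big), & \tfrac98\alpha'<\beta'.\end{cases}$$
   Context: Toy five-node model. Nodes, in order: 1 = angel in sketch (ID, class angel), 2 = tiger in sketch (ID, class tiger), 3 = angel in painting (covariate OOD, class angel), 4 = tiger in painting (covariate OOD, class tiger), 5 = panda (semantic OOD). The model is the first-order approximation (in $\alpha'=\alpha/\rho$, $\beta'=\beta/\rho$, with $\eta_u=5,\eta_l=1$) of the augmentation graph, given concretely by $M=\begin{pmatrix}1-2\beta'-\frac32\alpha'&2\beta'&\frac{3}{\sqrt2}\alpha'&0&0\\2\beta'&1-2\beta'-\frac32\alpha'&0&\frac3{\sqrt2}\alpha'&0\\\frac3{\sqrt2}\alpha'&0&1-2\beta'-3\alpha'&2\beta'&0\\0&\frac3{\sqrt2}\alpha'&2\beta'&1-2\beta'-3\alpha'&0\\0&0&0&0&1\end{pmatrix}$, $C=7+12\beta'+12\alpha'$, and $\Delta=\sqrt{C}\,\mathrm{diag}\big(\tfrac{1}{\sqrt2}(1-\beta'-\tfrac34\alpha'),\tfrac1{\sqrt2}(1-\beta'-\tfrac34\alpha'),1-\beta'-\tfrac32\alpha',1-\beta'-\tfrac32\alpha',1\big)$.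 Embeddings: let $V\in\mathbb{R}^{5\times3}$ have orthonormal columns spanning eigenvectors of $M$ for its three largest eigenvalues (with multiplicity), $\Sigma$ the diagonal matrix of those eigenvalues, and $Z=\Delta V\Sigma^{1/2}$ with $i$-th row $z_i^\top$ the embedding of node $i$. (Distances between rows do not depend on the choice of orthonormal basis within eigenspaces.) *)

theory Defs
  imports Complex_Main
begin

text \<open>Nodes are indexed 1..5, embedding coordinates 1..3.
  Matrices are represented as functions nat => nat => real, meaningful on the
  index ranges {1..5} x {1..5} (resp. {1..5} x {1..3}).
  Parameters: a = alpha', b = beta'.\<close>

definition M_list :: "real \<Rightarrow> real \<Rightarrow> real list list" where
  "M_list a b =
    [[1 - 2*b - 3/2*a, 2*b, 3/sqrt 2*a, 0, 0],
     [2*b, 1 - 2*b - 3/2*a, 0, 3/sqrt 2*a, 0],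
     [3/sqrt 2*a, 0, 1 - 2*b - 3*a, 2*b, 0],
     [0, 3/sqrt 2*a, 2*b, 1 - 2*b - 3*a, 0],
     [0, 0, 0, 0, 1]]"

definition Mmat :: "real \<Rightarrow> real \<Rightarrow> nat \<Rightarrow> nat \<Rightarrow> real" where
  "Mmat a b i j = (M_list a b ! (i - 1)) ! (j - 1)"

definition Cconst :: "real \<Rightarrow> real \<Rightarrow> real" where
  "Cconst a b = 7 + 12*b + 12*a"

definition Delta_diag :: "real \<Rightarrow> real \<Rightarrow> nat \<Rightarrow> real" where
  "Delta_diag a b i = sqrt (Cconst a b) *
     (if i = 1 \<or> i = 2 then (1 - b - 3/4*a) / sqrt 2
      else if i = 3 \<or> i = 4 then 1 - b - 3/2*a
      else 1)"

text \<open>V (5x3) has orthonormal columns which are eigenvectors of M with eigenvalues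
  sigma 1, sigma 2, sigma 3, and these are the three largest eigenvalues of M
  counted with multiplicity: since M is symmetric, the remaining eigenvalues are
  exactly the eigenvalues of M on the orthogonal complement of the column span
  of V, and all of those are required to be at most every sigma j.\<close>
definition top3_eig :: "real \<Rightarrow> real \<Rightarrow> (nat \<Rightarrow> nat \<Rightarrow> real) \<Rightarrow> (nat \<Rightarrow> real) \<Rightarrow> bool" where
  "top3_eig a b V \<sigma> \<longleftrightarrow>
     (\<forall>j\<in>{1..3}. \<forall>k\<in>{1..3}.
        (\<Sum>i=1..5. V i j * V i k) = (if j = k then 1 else 0)) \<and>
     (\<forall>i\<in>{1..5}. \<forall>j\<in>{1..3}.
        (\<Sum>k=1..5. Mmat a b i k * V k j) = \<sigma> j * V i j) \<and>
     (\<forall>(x::nat \<Rightarrow> real) \<mu>.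
        (\<exists>i\<in>{1..5}. x i \<noteq> 0) \<and>
        (\<forall>i\<in>{1..5}. (\<Sum>k=1..5. Mmat a b i k * x k) = \<mu> * x i) \<and>
        (\<forall>j\<in>{1..3}. (\<Sum>i=1..5. V i j * x i) = 0)
        \<longrightarrow> (\<forall>j\<in>{1..3}. \<mu> \<le> \<sigma> j))"

definition Zemb :: "real \<Rightarrow> real \<Rightarrow> (nat \<Rightarrow> nat \<Rightarrow> real) \<Rightarrow> (nat \<Rightarrow> real) \<Rightarrow> nat \<Rightarrow> nat \<Rightarrow> real" where
  "Zemb a b V \<sigma> i j = Delta_diag a b i * V i j * sqrt (\<sigma> j)"

definition sqdist3 :: "(nat \<Rightarrow> real) \<Rightarrow> (nat \<Rightarrow> real) \<Rightarrow> real" where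
  "sqdist3 u v = (\<Sum>j=1..3. (u j - v j)^2)"

definition separability :: "real \<Rightarrow> real \<Rightarrow> (nat \<Rightarrow> nat \<Rightarrow> real) \<Rightarrow> (nat \<Rightarrow> real) \<Rightarrow> real" where
  "separability a b V \<sigma> =
     (sqdist3 (Zemb a b V \<sigma> 1) (Zemb a b V \<sigma> 5) + sqdist3 (Zemb a b V \<sigma> 2) (Zemb a b V \<sigma> 5)) / 2"

end

theory Submission
  imports Defs "HOL-Analysis.Analysis"
begin

text \<open>M is symmetric and has the explicit orthonormal eigenbasis \<open>toy_eigvecs\<close>, with
  eigenvalues 1, 1, 1 - 4 b, 1 - 9/2 a, 1 - 4 b - 9/2 a; which of the two middle ones is larger
  depends on the sign of 9/8 a - b, and for 9/8 a \<noteq> b the top three are strictly separated from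
  the rest. Because of that gap, the columns of any admissible V span the same space as the top
  three basis vectors, so V \<Sigma> V' is the spectral part of M on that space. Each squared distance
  between embeddings is a quadratic form in V \<Sigma> V', hence can be evaluated in the explicit basis.\<close>

lemma sum_1_3: "(\<Sum>j=(1::nat)..3. f j) = f 1 + f 2 + f 3"
proof -
  have "{1..3::nat} = {1,2,3}" by auto
  then show ?thesis by (simp add: add.assoc)
qed

lemma sum_1_5: "(\<Sum>j=(1::nat)..5. f j) = f 1 + f 2 + f 3 + f 4 + f 5"
proof -
  have "{1..5::nat} = {1,2,3,4,5}" by auto
  then show ?thesis by (simp add: add.assoc)
qed

lemma sum_1_5_split: "(\<Sum>j=(1::nat)..5. f j) = (\<Sum>j=1..3. f j) + f 4 + f 5"
  unfolding sum_1_5 sum_1_3 by simp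

lemma ball_1_3: "(\<forall>j\<in>{1..3::nat}. P j) \<longleftrightarrow> P 1 \<and> P 2 \<and> P 3"
proof -
  have "{1..3::nat} = {1,2,3}" by auto
  then show ?thesis by simp
qed

lemma ball_1_5: "(\<forall>j\<in>{1..5::nat}. P j) \<longleftrightarrow> P 1 \<and> P 2 \<and> P 3 \<and> P 4 \<and> P 5"
proof -
  have "{1..5::nat} = {1,2,3,4,5}" by auto
  then show ?thesis by simp
qed

lemma orthonormal_cols_if_orthonormal_rows_3:
  fixes U :: "nat \<Rightarrow> nat \<Rightarrow> real"
  assumes "\<And>j l. j \<in> {1..3} \<Longrightarrow> l \<in> {1..3} \<Longrightarrow> (\<Sum>k=1..3. U j k * U l k) = (if j = l then 1 else 0)"
    and "k \<in> {1..3}" "l \<in> {1..3}"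
  shows "(\<Sum>j=1..3. U j k * U j l) = (if k = l then 1 else 0)"
proof -
  define idx :: "3 \<Rightarrow> nat" where "idx x = (if x = 1 then 1 else if x = 2 then 2 else 3)" for x
  have idx: "idx 1 = 1" "idx 2 = 2" "idx 3 = 3" by (simp_all add: idx_def)
  define A :: "real^3^3" where "A = (\<chi> j k. U (idx j) (idx k))"
  have "A ** transpose A = mat 1"
    using assms(1) unfolding sum_1_3
    by (simp add: vec_eq_iff forall_3 sum_3 A_def matrix_matrix_mult_def transpose_def mat_def idx)
  then have "transpose A ** A = mat 1" using matrix_left_right_inverse by blast
  then have "\<forall>k l. (\<Sum>j\<in>UNIV. A $ j $ k * A $ j $ l) = (if k = l then 1 else 0)"
    by (simp add: vec_eq_iff matrix_matrix_mult_def transpose_def mat_def)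
  moreover have "k \<in> {1,2,3}" "l \<in> {1,2,3}" using assms(2,3) by auto
  ultimately show ?thesis unfolding sum_1_3
    by (auto simp: forall_3 sum_3 A_def idx)
qed

definition top3_eigvecs :: "(nat \<Rightarrow> nat \<Rightarrow> real) \<Rightarrow> (nat \<Rightarrow> nat \<Rightarrow> real) \<Rightarrow> (nat \<Rightarrow> real) \<Rightarrow> bool" where
  "top3_eigvecs M V \<sigma> \<longleftrightarrow>
     (\<forall>j\<in>{1..3}. \<forall>k\<in>{1..3}.
        (\<Sum>i=1..5. V i j * V i k) = (if j = k then 1 else 0)) \<and>
     (\<forall>i\<in>{1..5}. \<forall>j\<in>{1..3}.
        (\<Sum>k=1..5. M i k * V k j) = \<sigma> j * V i j) \<and>
     (\<forall>(x::nat \<Rightarrow> real) \<mu>.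
        (\<exists>i\<in>{1..5}. x i \<noteq> 0) \<and>
        (\<forall>i\<in>{1..5}. (\<Sum>k=1..5. M i k * x k) = \<mu> * x i) \<and>
        (\<forall>j\<in>{1..3}. (\<Sum>i=1..5. V i j * x i) = 0)
        \<longrightarrow> (\<forall>j\<in>{1..3}. \<mu> \<le> \<sigma> j))"

lemma top3_eig_iff: "top3_eig a b V \<sigma> \<longleftrightarrow> top3_eigvecs (Mmat a b) V \<sigma>"
  unfolding top3_eig_def top3_eigvecs_def by simp

locale sym_eigenbasis5 =
  fixes M F :: "nat \<Rightarrow> nat \<Rightarrow> real" and lam :: "nat \<Rightarrow> real"
  assumes symmetric: "\<And>i l. i \<in> {1..5} \<Longrightarrow> l \<in> {1..5} \<Longrightarrow> M i l = M l i"
    and orthonormal_rows: "\<And>k l. k \<in> {1..5} \<Longrightarrow> l \<in> {1..5} \<Longrightarrow>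
      (\<Sum>i=1..5. F k i * F l i) = (if k = l then 1 else 0)"
    and orthonormal_cols: "\<And>i i'. i \<in> {1..5} \<Longrightarrow> i' \<in> {1..5} \<Longrightarrow>
      (\<Sum>k=1..5. F k i * F k i') = (if i = i' then 1 else 0)"
    and eigen: "\<And>k i. k \<in> {1..5} \<Longrightarrow> i \<in> {1..5} \<Longrightarrow>
      (\<Sum>l=1..5. M i l * F k l) = lam k * F k i"
    and gap: "\<And>k k'. k \<in> {1..3} \<Longrightarrow> k' \<in> {4..5} \<Longrightarrow> lam k' < lam k"
begin

lemma expand_in_basis:
  assumes "i \<in> {1..5}"
  shows "x i = (\<Sum>k=1..5. (\<Sum>i'=1..5. F k i' * x i') * F k i)"
proof -
  have "(\<Sum>k=1..5. (\<Sum>i'=1..5. F k i' * x i') * F k i) = (\<Sum>i'=1..5. x i' * (\<Sum>k=1..5. F k i' * F k i))"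
    by (simp add: sum_distrib_left sum_distrib_right mult_ac) (rule sum.swap)
  also have "\<dots> = (\<Sum>i'=1..5. if i' = i then x i' else 0)"
    using orthonormal_cols assms by (intro sum.cong) auto
  finally show ?thesis using assms by simp
qed

lemma eigen_coord:
  assumes "\<forall>i\<in>{1..5}. (\<Sum>l=1..5. M i l * x l) = \<mu> * x i" and "k \<in> {1..5}"
  shows "lam k * (\<Sum>i=1..5. F k i * x i) = \<mu> * (\<Sum>i=1..5. F k i * x i)"
proof -
  have "lam k * (\<Sum>i=1..5. F k i * x i) = (\<Sum>i=1..5. (\<Sum>l=1..5. M i l * F k l) * x i)"
    unfolding sum_distrib_left using eigen assms(2) by (intro sum.cong refl) (auto simp: mult_ac)
  also have "\<dots> = (\<Sum>l=1..5. F k l * (\<Sum>i=1..5. M i l * x i))"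
    by (simp add: sum_distrib_left sum_distrib_right mult_ac) (rule sum.swap)
  also have "\<dots> = (\<Sum>l=1..5. F k l * (\<mu> * x l))"
  proof (intro sum.cong refl)
    fix l :: nat assume l: "l \<in> {1..5}"
    have "(\<Sum>i=1..5. M i l * x i) = (\<Sum>i=1..5. M l i * x i)"
      using symmetric l by (intro sum.cong) auto
    then show "F k l * (\<Sum>i=1..5. M i l * x i) = F k l * (\<mu> * x l)" using assms(1) l by simp
  qed
  finally show ?thesis by (simp add: sum_distrib_left mult_ac)
qed

lemma top3_eigvecs_basis: "top3_eigvecs M (\<lambda>i j. F j i) lam"
  unfolding top3_eigvecs_def
proof (intro conjI allI impI)
  show "\<forall>j\<in>{1..3}. \<forall>k\<in>{1..3}. (\<Sum>i=1..5. F j i * F k i) = (if j = k then 1 else 0)"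
    using orthonormal_rows by auto
  show "\<forall>i\<in>{1..5}. \<forall>j\<in>{1..3}. (\<Sum>k=1..5. M i k * F j k) = lam j * F j i"
    using eigen by auto
  fix x :: "nat \<Rightarrow> real" and \<mu> :: real
  assume x: "(\<exists>i\<in>{1..5}. x i \<noteq> 0) \<and> (\<forall>i\<in>{1..5}. (\<Sum>k=1..5. M i k * x k) = \<mu> * x i) \<and>
    (\<forall>j\<in>{1..3}. (\<Sum>i=1..5. F j i * x i) = 0)"
  show "\<forall>j\<in>{1..3}. \<mu> \<le> lam j"
  proof (rule ccontr)
    assume "\<not> (\<forall>j\<in>{1..3}. \<mu> \<le> lam j)"
    then obtain j where j: "j \<in> {1..3}" "lam j < \<mu>" by force
    have coord_zero: "(\<Sum>i=1..5. F k i * x i) = 0" if "k \<in> {1..5}" for k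
    proof (cases "k \<le> 3")
      case True
      then show ?thesis using x that by auto
    next
      case False
      then have "lam k \<noteq> \<mu>" using gap[OF j(1), of k] j(2) that by auto
      then show ?thesis using eigen_coord[of x \<mu> k] x that by auto
    qed
    have "x i = 0" if "i \<in> {1..5}" for i
      using expand_in_basis[OF that, of x] coord_zero by simp
    then show False using x by blast
  qed
qed

end

locale top3_of_sym_eigenbasis5 = sym_eigenbasis5 +
  fixes V :: "nat \<Rightarrow> nat \<Rightarrow> real" and \<sigma> :: "nat \<Rightarrow> real"
  assumes top3: "top3_eigvecs M V \<sigma>"
begin

lemma V_orthonormal: "j \<in> {1..3} \<Longrightarrow> l \<in> {1..3} \<Longrightarrow> (\<Sum>i=1..5. V i j * V i l) = (if j = l then 1 else 0)"
  and V_eigen: "i \<in> {1..5} \<Longrightarrow> j \<in> {1..3} \<Longrightarrow> (\<Sum>k=1..5. M i k * V k j) = \<sigma> j * V i j"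
  and V_maximal: "(\<exists>i\<in>{1..5}. x i \<noteq> 0) \<Longrightarrow> (\<forall>i\<in>{1..5}. (\<Sum>k=1..5. M i k * x k) = \<mu> * x i) \<Longrightarrow>
    (\<forall>j\<in>{1..3}. (\<Sum>i=1..5. V i j * x i) = 0) \<Longrightarrow> j \<in> {1..3} \<Longrightarrow> \<mu> \<le> \<sigma> j"
  using top3 unfolding top3_eigvecs_def by blast+

definition W :: "nat \<Rightarrow> nat \<Rightarrow> real" where
  "W j k = (\<Sum>i=1..5. F k i * V i j)"

lemma V_expand: "i \<in> {1..5} \<Longrightarrow> V i j = (\<Sum>k=1..5. W j k * F k i)"
  unfolding W_def by (rule expand_in_basis)

lemma W_orthonormal:
  assumes "j \<in> {1..3}" "l \<in> {1..3}"
  shows "(\<Sum>k=1..5. W j k * W l k) = (if j = l then 1 else 0)"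
proof -
  have "(\<Sum>k=1..5. W j k * W l k) = (\<Sum>i=1..5. V i l * (\<Sum>k=1..5. W j k * F k i))"
    by (simp add: W_def sum_distrib_left mult_ac) (rule sum.swap)
  also have "\<dots> = (\<Sum>i=1..5. V i j * V i l)"
    using V_expand by (intro sum.cong) auto
  finally show ?thesis using V_orthonormal assms by simp
qed

lemma W_eigen: "j \<in> {1..3} \<Longrightarrow> k \<in> {1..5} \<Longrightarrow> \<sigma> j * W j k = lam k * W j k"
  unfolding W_def using eigen_coord[of "\<lambda>i. V i j" "\<sigma> j" k] V_eigen by auto

text \<open>The residual of F k after projecting onto the columns of V is again an eigenvector for lam k,
  orthogonal to V; by maximality of \<sigma> it must vanish.\<close>
lemma basis_vector_in_span:
  assumes k: "k \<in> {1..5}" and j: "j \<in> {1..3}" and above: "\<sigma> j < lam k" and i: "i \<in> {1..5}"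
  shows "F k i = (\<Sum>j'=1..3. W j' k * V i j')"
proof -
  define r where "r i = F k i - (\<Sum>j'=1..3. W j' k * V i j')" for i
  have "(\<Sum>l=1..5. M i l * r l) = lam k * r i" if "i \<in> {1..5}" for i
  proof -
    have "(\<Sum>l=1..5. M i l * r l) = (\<Sum>l=1..5. M i l * F k l) - (\<Sum>j'=1..3. W j' k * (\<Sum>l=1..5. M i l * V l j'))"
      unfolding r_def by (simp add: right_diff_distrib sum_subtractf sum_distrib_left mult_ac) (rule sum.swap)
    also have "\<dots> = lam k * F k i - (\<Sum>j'=1..3. lam k * W j' k * V i j')"
      using eigen V_eigen W_eigen k that by (auto intro!: sum.cong simp: mult_ac)
    finally show ?thesis by (simp add: r_def right_diff_distrib sum_distrib_left mult_ac)
  qed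
  moreover have "(\<Sum>i=1..5. V i j' * r i) = 0" if "j' \<in> {1..3}" for j'
  proof -
    have "(\<Sum>i=1..5. V i j' * r i) = W j' k - (\<Sum>j''=1..3. W j'' k * (\<Sum>i=1..5. V i j' * V i j''))"
      unfolding r_def W_def by (simp add: right_diff_distrib sum_subtractf sum_distrib_left mult_ac) (rule sum.swap)
    also have "\<dots> = W j' k - (\<Sum>j''=1..3. if j' = j'' then W j'' k else 0)"
      using V_orthonormal[OF that] by (intro arg_cong2[where f = minus] sum.cong) auto
    finally show ?thesis using that by simp
  qed
  ultimately have "\<not> (\<exists>i\<in>{1..5}. r i \<noteq> 0)"
    using V_maximal[of r "lam k" j] j above by auto
  then show ?thesis using i by (simp add: r_def)
qed

lemma W_vanishes_low:
  assumes j: "j \<in> {1..3}" and k': "k' \<in> {4..5}"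
  shows "W j k' = 0"
proof (rule ccontr)
  assume "W j k' \<noteq> 0"
  moreover have "\<sigma> j * W j k' = lam k' * W j k'" using W_eigen j k' by auto
  ultimately have "\<sigma> j = lam k'" by simp
  then have span: "F k i = (\<Sum>j'=1..3. W j' k * V i j')" if "k \<in> {1..3}" "i \<in> {1..5}" for k i
    using basis_vector_in_span[OF _ j _ that(2)] gap[OF that(1) k'] that(1) by auto
  have "(\<Sum>j'=1..3. W j' k * W j' l) = (if k = l then 1 else 0)" if "k \<in> {1..3}" "l \<in> {1..3}" for k l
  proof -
    have "(\<Sum>j'=1..3. W j' k * W j' l) = (\<Sum>i=1..5. F l i * (\<Sum>j'=1..3. W j' k * V i j'))"
      by (simp add: W_def sum_distrib_left sum_distrib_right mult_ac) (rule sum.swap)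
    also have "\<dots> = (\<Sum>i=1..5. F l i * F k i)"
      using span that by (intro sum.cong) auto
    finally show ?thesis using orthonormal_rows that by auto
  qed
  then have "(\<Sum>k=1..3. W j k * W j k) = 1"
    using orthonormal_cols_if_orthonormal_rows_3[of "\<lambda>k j. W j k"] j by auto
  moreover have "(\<Sum>k=1..3. W j k * W j k) + W j 4 * W j 4 + W j 5 * W j 5 = 1"
    using W_orthonormal[OF j j] by (simp only: sum_1_5_split) simp
  ultimately have "W j 4 = 0 \<and> W j 5 = 0" by (simp add: sum_squares_eq_zero_iff)
  moreover have "k' = 4 \<or> k' = 5" using k' by auto
  ultimately show False using \<open>W j k' \<noteq> 0\<close> by auto
qed

lemma W_block_orthonormal_cols:
  assumes "k \<in> {1..3}" "l \<in> {1..3}"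
  shows "(\<Sum>j=1..3. W j k * W j l) = (if k = l then 1 else 0)"
proof (rule orthonormal_cols_if_orthonormal_rows_3[OF _ assms])
  fix j j' :: nat assume "j \<in> {1..3}" "j' \<in> {1..3}"
  then show "(\<Sum>k=1..3. W j k * W j' k) = (if j = j' then 1 else 0)"
    using W_orthonormal[of j j'] W_vanishes_low[of _ 4] W_vanishes_low[of _ 5]
    unfolding sum_1_5_split by simp
qed

lemma top3_quadratic_form:
  "(\<Sum>j=1..3. \<sigma> j * (\<Sum>i=1..5. y i * V i j)^2) = (\<Sum>k=1..3. lam k * (\<Sum>i=1..5. y i * F k i)^2)"
proof -
  define Y where "Y k = (\<Sum>i=1..5. y i * F k i)" for k
  have yV: "(\<Sum>i=1..5. y i * V i j) = (\<Sum>k=1..3. W j k * Y k)" if "j \<in> {1..3}" for j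
  proof -
    have "(\<Sum>i=1..5. y i * V i j) = (\<Sum>i=1..5. y i * (\<Sum>k=1..5. W j k * F k i))"
      using V_expand by (intro sum.cong) auto
    also have "\<dots> = (\<Sum>k=1..5. W j k * Y k)"
      by (simp add: Y_def sum_distrib_left sum_distrib_right mult_ac) (rule sum.swap)
    finally show ?thesis
      using W_vanishes_low[OF that, of 4] W_vanishes_low[OF that, of 5] unfolding sum_1_5_split by simp
  qed
  have "(\<Sum>j=1..3. \<sigma> j * (\<Sum>i=1..5. y i * V i j)^2)
      = (\<Sum>j=1..3. \<Sum>k=1..3. \<Sum>l=1..3. lam k * Y k * Y l * (W j k * W j l))"
  proof (intro sum.cong refl)
    fix j :: nat assume j: "j \<in> {1..3}"
    have "\<sigma> j * (\<Sum>i=1..5. y i * V i j)^2 = (\<Sum>k=1..3. \<sigma> j * W j k * Y k) * (\<Sum>l=1..3. W j l * Y l)"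
      using yV[OF j] by (simp add: power2_eq_square sum_distrib_left mult_ac)
    also have "\<dots> = (\<Sum>k=1..3. lam k * W j k * Y k) * (\<Sum>l=1..3. W j l * Y l)"
      using W_eigen j by (auto intro!: sum.cong)
    finally show "\<sigma> j * (\<Sum>i=1..5. y i * V i j)^2 = (\<Sum>k=1..3. \<Sum>l=1..3. lam k * Y k * Y l * (W j k * W j l))"
      by (simp add: sum_distrib_left sum_distrib_right mult_ac)
  qed
  also have "\<dots> = (\<Sum>k=1..3. \<Sum>l=1..3. \<Sum>j=1..3. lam k * Y k * Y l * (W j k * W j l))"
    by (subst sum.swap) (rule sum.cong[OF refl], rule sum.swap)
  also have "\<dots> = (\<Sum>k=1..3. \<Sum>l=1..3. lam k * Y k * Y l * (\<Sum>j=1..3. W j k * W j l))"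
    by (simp add: sum_distrib_left)
  also have "\<dots> = (\<Sum>k=1..3. \<Sum>l=1..3. if k = l then lam k * Y k * Y l else 0)"
    by (intro sum.cong refl) (simp only: W_block_orthonormal_cols, simp)
  also have "\<dots> = (\<Sum>k=1..3. lam k * (Y k)^2)"
    by (simp add: power2_eq_square mult.assoc)
  finally show ?thesis by (simp add: Y_def)
qed

lemma top3_eigval_nonneg:
  assumes "\<And>k. k \<in> {1..3} \<Longrightarrow> lam k \<ge> 0" and j: "j \<in> {1..3}"
  shows "\<sigma> j \<ge> 0"
proof -
  have "\<sigma> j = \<sigma> j * (\<Sum>k=1..5. W j k * W j k)" using W_orthonormal[OF j j] by simp
  also have "\<dots> = (\<Sum>k=1..5. lam k * (W j k * W j k))"
    using W_eigen[OF j] by (auto simp: sum_distrib_left mult.assoc[symmetric] intro!: sum.cong)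
  also have "\<dots> = (\<Sum>k=1..3. lam k * (W j k * W j k))"
    using W_vanishes_low[OF j, of 4] W_vanishes_low[OF j, of 5] unfolding sum_1_5_split by simp
  also have "\<dots> \<ge> 0" using assms(1) by (intro sum_nonneg) auto
  finally show ?thesis .
qed

end

lemma sum_two_points:
  fixes p q :: nat
  assumes "p \<in> {1..5}" "q \<in> {1..5}" "p \<noteq> q"
  shows "(\<Sum>i=1..5. (if i = p then c else if i = q then d else 0) * x i) = c * x p + d * (x q :: real)"
proof -
  have "(\<Sum>i=1..5. (if i = p then c else if i = q then d else 0) * x i)
      = (\<Sum>i=1..5. (if i = p then c * x i else 0) + (if i = q then d * x i else 0))"
    using assms(3) by (intro sum.cong) auto
  then show ?thesis using assms(1,2) by (simp add: sum.distrib)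
qed

lemma sqdist3_Zemb:
  assumes "\<And>j. j \<in> {1..3} \<Longrightarrow> \<sigma> j \<ge> 0"
  shows "sqdist3 (Zemb a b V \<sigma> p) (Zemb a b V \<sigma> q) =
    (\<Sum>j=1..3. \<sigma> j * (Delta_diag a b p * V p j - Delta_diag a b q * V q j)^2)"
  unfolding sqdist3_def
proof (intro sum.cong refl)
  fix j :: nat assume "j \<in> {1..3}"
  then have "(sqrt (\<sigma> j))^2 = \<sigma> j" using assms by simp
  moreover have "Zemb a b V \<sigma> p j - Zemb a b V \<sigma> q j =
      sqrt (\<sigma> j) * (Delta_diag a b p * V p j - Delta_diag a b q * V q j)"
    unfolding Zemb_def by (simp add: algebra_simps)
  ultimately show "(Zemb a b V \<sigma> p j - Zemb a b V \<sigma> q j)^2 =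
      \<sigma> j * (Delta_diag a b p * V p j - Delta_diag a b q * V q j)^2"
    by (simp add: power_mult_distrib)
qed

lemma separability_via_eigenbasis:
  assumes "top3_of_sym_eigenbasis5 (Mmat a b) F lam V \<sigma>" and "\<And>k. k \<in> {1..3} \<Longrightarrow> lam k \<ge> 0"
  shows "separability a b V \<sigma> =
    ((\<Sum>k=1..3. lam k * (Delta_diag a b 1 * F k 1 - Delta_diag a b 5 * F k 5)^2)
   + (\<Sum>k=1..3. lam k * (Delta_diag a b 2 * F k 2 - Delta_diag a b 5 * F k 5)^2)) / 2"
proof -
  interpret top3_of_sym_eigenbasis5 "Mmat a b" F lam V \<sigma> by (fact assms(1))
  have node_dist: "sqdist3 (Zemb a b V \<sigma> p) (Zemb a b V \<sigma> 5) =
      (\<Sum>k=1..3. lam k * (Delta_diag a b p * F k p - Delta_diag a b 5 * F k 5)^2)"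
    if "p \<in> {1..4}" for p
  proof -
    let ?y = "\<lambda>i. if i = p then Delta_diag a b p else if i = 5 then - Delta_diag a b 5 else 0"
    have "p \<in> {1..5}" "p \<noteq> 5" using that by auto
    note two_points = sum_two_points[OF this(1) _ this(2), simplified]
    have "sqdist3 (Zemb a b V \<sigma> p) (Zemb a b V \<sigma> 5) = (\<Sum>j=1..3. \<sigma> j * (\<Sum>i=1..5. ?y i * V i j)^2)"
      using sqdist3_Zemb top3_eigval_nonneg[OF assms(2)] two_points by simp
    also have "\<dots> = (\<Sum>k=1..3. lam k * (\<Sum>i=1..5. ?y i * F k i)^2)"
      by (rule top3_quadratic_form)
    finally show ?thesis using two_points by simp
  qed
  show ?thesis unfolding separability_def using node_dist[of 1] node_dist[of 2] by simp
qed

lemma Mmat_symmetric: "\<forall>i\<in>{1..5}. \<forall>l\<in>{1..5}. Mmat a b i l = Mmat a b l i"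
  unfolding ball_1_5 Mmat_def M_list_def by simp

text \<open>An explicit eigenbasis of M, ordered by decreasing eigenvalue: the flag records whether
  the eigenvalue 1 - 4 b of the class-separating mode exceeds the eigenvalue 1 - 9/2 a of the
  domain-separating mode, i.e. whether 9/8 a > b.\<close>
definition toy_eigvecs :: "bool \<Rightarrow> real list list" where
  "toy_eigvecs s = (let u = sqrt 6 / 6; w = sqrt 2 * u in
     [[w, w, u, u, 0], [0, 0, 0, 0, 1]] @
     (if s then [[w, -w, u, -u, 0], [u, u, -w, -w, 0]] else [[u, u, -w, -w, 0], [w, -w, u, -u, 0]]) @
     [[u, -u, -w, w, 0]])"

definition toy_F :: "bool \<Rightarrow> nat \<Rightarrow> nat \<Rightarrow> real" where
  "toy_F s k i = toy_eigvecs s ! (k - 1) ! (i - 1)"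

definition toy_lam :: "real \<Rightarrow> real \<Rightarrow> bool \<Rightarrow> nat \<Rightarrow> real" where
  "toy_lam a b s k = ([1, 1] @ (if s then [1 - 4*b, 1 - 9/2*a] else [1 - 9/2*a, 1 - 4*b]) @
     [1 - 4*b - 9/2*a]) ! (k - 1)"

lemma sqrt2_sqrt2_mult: "sqrt 2 * (sqrt 2 * x) = 2 * (x::real)"
  by (simp add: mult.assoc[symmetric])

lemma sqrt6_sqrt6_mult: "sqrt 6 * (sqrt 6 * x) = 6 * (x::real)"
  by (simp add: mult.assoc[symmetric])

lemma toy_F_orthonormal_rows:
  "\<forall>k\<in>{1..5}. \<forall>l\<in>{1..5}. (\<Sum>i=1..5. toy_F s k i * toy_F s l i) = (if k = l then 1 else 0)"
  unfolding ball_1_5 sum_1_5 toy_F_def toy_eigvecs_def Let_def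
  by (cases s) (simp_all add: algebra_simps)

lemma toy_F_orthonormal_cols:
  "\<forall>i\<in>{1..5}. \<forall>i'\<in>{1..5}. (\<Sum>k=1..5. toy_F s k i * toy_F s k i') = (if i = i' then 1 else 0)"
  unfolding ball_1_5 sum_1_5 toy_F_def toy_eigvecs_def Let_def
  by (cases s) (simp_all add: algebra_simps)

lemma toy_F_eigen:
  "\<forall>k\<in>{1..5}. \<forall>i\<in>{1..5}. (\<Sum>l=1..5. Mmat a b i l * toy_F s k l) = toy_lam a b s k * toy_F s k i"
proof -
  have "3 / sqrt 2 * a = 3 * sqrt 2 / 2 * a" by (simp add: field_simps)
  then show ?thesis
    unfolding ball_1_5 sum_1_5 toy_F_def toy_eigvecs_def Let_def Mmat_def M_list_def toy_lam_def
    by (cases s) (simp_all add: field_simps sqrt2_sqrt2_mult sqrt6_sqrt6_mult)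
qed

lemma toy_lam_gap:
  assumes "0 < a" "0 < b" "s \<longleftrightarrow> 9/8*a > b" "9/8*a \<noteq> b"
  shows "\<forall>k\<in>{1..3}. \<forall>k'\<in>{4..5}. toy_lam a b s k' < toy_lam a b s k"
proof -
  have "{4..5::nat} = {4, 5}" by auto
  then show ?thesis unfolding ball_1_3 toy_lam_def using assms by (cases s) auto
qed

lemma toy_lam_nonneg:
  assumes "a < 2/9" "b < 1/4" "k \<in> {1..3}"
  shows "toy_lam a b s k \<ge> 0"
proof -
  have "\<forall>k\<in>{1..3}. toy_lam a b s k \<ge> 0"
    unfolding ball_1_3 toy_lam_def using assms by (cases s) auto
  then show ?thesis using assms(3) by blast
qed

lemma toy_sym_eigenbasis5:
  assumes "0 < a" "0 < b" "s \<longleftrightarrow> 9/8*a > b" "9/8*a \<noteq> b"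
  shows "sym_eigenbasis5 (Mmat a b) (toy_F s) (toy_lam a b s)"
  using Mmat_symmetric toy_F_orthonormal_rows toy_F_orthonormal_cols toy_F_eigen toy_lam_gap[OF assms]
  by unfold_locales blast+

lemma toy_separability:
  assumes "top3_of_sym_eigenbasis5 (Mmat a b) (toy_F s) (toy_lam a b s) V \<sigma>"
    and "0 < a" "a < 2/9" "0 < b" "b < 1/4"
  shows "separability a b V \<sigma> =
    (if s then (7 + 12*b + 12*a) * ((1 - 2*b)/3 * (1 - b - 3/4*a)^2 + 1)
     else (7 + 12*b + 12*a) * ((2 - 3*a)/8 * (1 - b - 3/4*a)^2 + 1))"
proof -
  have "separability a b V \<sigma> =
    ((\<Sum>k=1..3. toy_lam a b s k * (Delta_diag a b 1 * toy_F s k 1 - Delta_diag a b 5 * toy_F s k 5)^2)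
   + (\<Sum>k=1..3. toy_lam a b s k * (Delta_diag a b 2 * toy_F s k 2 - Delta_diag a b 5 * toy_F s k 5)^2)) / 2"
    using assms(1) toy_lam_nonneg[OF assms(3,5)] by (rule separability_via_eigenbasis)
  moreover have "0 \<le> Cconst a b" using assms by (simp add: Cconst_def)
  ultimately show ?thesis
    unfolding sum_1_3 toy_F_def toy_eigvecs_def Let_def toy_lam_def Delta_diag_def
    by (cases s) (simp_all add: power2_eq_square field_simps sqrt2_sqrt2_mult sqrt6_sqrt6_mult Cconst_def)
qed

theorem theorem3:
  fixes a b :: real
  assumes "0 < a" "a < 2/9" "0 < b" "b < 1/4" "9/8*a \<noteq> b"
  shows "(\<exists>V \<sigma>. top3_eig a b V \<sigma>) \<and>
    (\<forall>V \<sigma>. top3_eig a b V \<sigma> \<longrightarrow>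
      separability a b V \<sigma> =
        (if 9/8*a > b
         then (7 + 12*b + 12*a) * ((1 - 2*b)/3 * (1 - b - 3/4*a)^2 + 1)
         else (7 + 12*b + 12*a) * ((2 - 3*a)/8 * (1 - b - 3/4*a)^2 + 1)))"
proof -
  define s where "s \<longleftrightarrow> 9/8*a > b"
  interpret basis: sym_eigenbasis5 "Mmat a b" "toy_F s" "toy_lam a b s"
    using toy_sym_eigenbasis5 assms s_def by blast
  have "top3_eig a b (\<lambda>i j. toy_F s j i) (toy_lam a b s)"
    using basis.top3_eigvecs_basis by (simp add: top3_eig_iff)
  moreover have "top3_of_sym_eigenbasis5 (Mmat a b) (toy_F s) (toy_lam a b s) V \<sigma>"
    if "top3_eig a b V \<sigma>" for V \<sigma>
    using that by unfold_locales (simp add: top3_eig_iff)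
  ultimately show ?thesis
    using toy_separability[of a b s] assms unfolding s_def by blast
qed

end
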